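(* Let $M,N\in\mathbb{N}$. For $n\geq 1$, the number $p_n(\mathbf M(M,N))$ of $n$-periodic points of the Motzkin shift is: if $n$ is even, $$2\Big\{(M+N+1)^n-\sum_{i=0}^{n/2}\binom{n}{2i}N^{2i}\sum_{j=0}^{n/2-i}\binom{n-2i}{j}M^j-\sum_{i=0}^{n/2-1}\binom{n}{2i+1}N^{2i+1}\sum_{j=0}^{n/2-i-1}\binom{n-2i-1}{j}M^j\Big\}+\sum_{i=0}^{n/2}\binom{n}{n-2i}\binom{2i}{i}M^iN^{n-2i};$$ if $n$ is odd, $$2\Big\{(M+N+1)^n-\sum_{i=0}^{n/2}\binom{n}{2i}N^{2i}\sum_{j=0}^{(n-1)/2-i}\binom{n-2i}{j}M^j-\sum_{i=0}^{(n-1)/2}\binom{n}{2i+1}N^{2i+1}\sum_{j=0}^{(n-1)/2-i}\binom{n-2i-1}{j}M^j\Big\}+\sum_{i=0}^{(n-1)/2}\binom{n}{n-2i}N^{n-2i}\binom{2i}{i}M^i.$$ Here all summation indices run over integers between the indicated bounds.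
   Context: Alphabet $\Sigma=\{\lambda_1,\dots,\lambda_M,\rho_1,\dots,\rho_M,1_1,\dots,1_N\}$. $\mathcal{M}(M,N)$ is the monoid with zero generated by $\Sigma$ and an identity $\mathbf{1}$, subject only to the relations $\lambda_i\rho_i=\mathbf{1}$, $\lambda_i\rho_j=0$ ($i\neq j$), each $1_i$ acts as the identity ($1_i\alpha=\alpha 1_i=\alpha$, $1_i1_j=\mathbf 1$), and $0$ is absorbing; no other relations. $\mathit{red}:\Sigma^*\to\mathcal{M}(M,N)$ sends a word to the product of its letters (empty word to $\mathbf 1$). The Motzkin shift is $\mathbf{M}(M,N)=\{x\in\Sigma^{\mathbb Z}:\mathit{red}(x_i\cdots x_j)\neq 0\ \forall i\le j\}$ with shift $\sigma$, and $p_n(\mathbf M(M,N))=\#\{x\in\mathbf M(M,N):\sigma^nx=x\}$. *)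

theory Defs
  imports Main
begin

datatype letter = Lam nat | Rho nat | One nat

definition Sigma :: "nat \<Rightarrow> nat \<Rightarrow> letter set" where
  "Sigma M N = {Lam i | i. 1 \<le> i \<and> i \<le> M} \<union> {Rho i | i. 1 \<le> i \<and> i \<le> M}
             \<union> {One i | i. 1 \<le> i \<and> i \<le> N}"

text \<open>The monoid with zero M(M,N) is presented as the quotient of the free monoid on the
  letters, with an adjoined absorbing zero (None), by the congruence generated by the
  defining relations.  Elements are represented by Some w (the class of the word w) or
  None (the zero).\<close>
inductive mstep :: "letter list option \<Rightarrow> letter list option \<Rightarrow> bool" where
  cancel: "mstep (Some (u @ [Lam i, Rho i] @ v)) (Some (u @ v))"
| kill:   "i \<noteq> j \<Longrightarrow> mstep (Some (u @ [Lam i, Rho j] @ v)) None"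
| unit:   "mstep (Some (u @ [One i] @ v)) (Some (u @ v))"

definition red_zero :: "letter list \<Rightarrow> bool" where
  "red_zero w \<longleftrightarrow> equivclp mstep (Some w) None"

definition motzkin_shift :: "nat \<Rightarrow> nat \<Rightarrow> (int \<Rightarrow> letter) set" where
  "motzkin_shift M N = {x. (\<forall>k. x k \<in> Sigma M N) \<and>
       (\<forall>i j. i \<le> j \<longrightarrow> \<not> red_zero (map x [i..j]))}"

definition periodic_points :: "nat \<Rightarrow> nat \<Rightarrow> nat \<Rightarrow> nat" where
  "periodic_points M N n = card {x \<in> motzkin_shift M N. \<forall>k. x (k + int n) = x k}"

end

theory Submission
  imports Defs
begin

text \<open>Words are reduced by a stack machine that cancels \<open>\<lambda>\<^sub>i\<rho>\<^sub>i\<close>, deletes the units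
  \<open>1\<^sub>i\<close> and fails on \<open>\<lambda>\<^sub>i\<rho>\<^sub>j\<close> with \<open>i \<noteq> j\<close>; the machine is invariant under the defining
  relations, so a word is zero in \<open>\<M>(M,N)\<close> exactly when it fails, and every factor of a
  nonzero word is nonzero.  An \<open>n\<close>-periodic point is the periodic extension of a word \<open>w\<close> of
  length \<open>n\<close>, and it lies in the Motzkin shift iff all powers \<open>w\<^sup>k\<close> are nonzero.  This
  property survives rotation of \<open>w\<close>, deletion of a unit and deletion of a matched pair
  \<open>\<lambda>\<^sub>i\<rho>\<^sub>i\<close>.  Sort the letters into the kinds \<open>\<lambda>\<close>, \<open>\<rho>\<close>, \<open>1\<close>: rotating a unit or a cyclically
  adjacent \<open>\<lambda>\<rho>\<close> to the front and deleting it shows that exactly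
  \<open>M\<^bsup>max(#\<lambda>, #\<rho>)\<^esup> N\<^bsup>#1\<^esup>\<close> admissible words have a given pattern of kinds.  Summing over the
  \<open>3\<^sup>n\<close> patterns gives \<open>\<Sum>\<^sub>c C(n,c) N\<^sup>c \<Sum>\<^sub>a C(n-c,a) M\<^bsup>max(a, n-c-a)\<^esup>\<close>, and splitting the
  inner sum at its middle term yields the closed formula.\<close>

section \<open>The word problem of \<open>\<M>(M,N)\<close>\<close>

text \<open>The state is the reduced form of the prefix read so far, stored reversed as a stack;
  \<^const>\<open>None\<close> is the zero.\<close>

fun reduce_step :: "letter list option \<Rightarrow> letter \<Rightarrow> letter list option" where
  "reduce_step None c = None"
| "reduce_step (Some st) (One i) = Some st"
| "reduce_step (Some st) (Lam i) = Some (Lam i # st)"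
| "reduce_step (Some st) (Rho j) =
     (case st of Lam i # r \<Rightarrow> if i = j then Some r else None | _ \<Rightarrow> Some (Rho j # st))"

definition reduce :: "letter list \<Rightarrow> letter list option" where
  "reduce w = foldl reduce_step (Some []) w"

lemma foldl_reduce_step_None [simp]: "foldl reduce_step None w = None"
  by (induction w) auto

lemma reduce_step_One [simp]: "reduce_step s (One i) = s"
  by (cases s) auto

lemma reduce_step_Lam_Rho: "reduce_step (reduce_step s (Lam i)) (Rho j) = (if i = j then s else None)"
  by (cases s) auto

lemma reduce_snoc: "reduce (w @ [c]) = reduce_step (reduce w) c"
  by (simp add: reduce_def)

lemma mstep_reduce_invariant: "mstep a b \<Longrightarrow> Option.bind a reduce = Option.bind b reduce"
  by (induction rule: mstep.induct) (simp_all add: reduce_def reduce_step_Lam_Rho)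

lemma equivclp_mstep_reduce_invariant:
  "equivclp mstep a b \<Longrightarrow> Option.bind a reduce = Option.bind b reduce"
  unfolding equivclp_def
  by (induction rule: rtranclp_induct) (auto simp: symclp_def dest: mstep_reduce_invariant)

lemma mstep_in_context:
  "mstep a b \<Longrightarrow> mstep (map_option (\<lambda>w. u @ w @ z) a) (map_option (\<lambda>w. u @ w @ z) b)"
proof (induction rule: mstep.induct)
  case (cancel u' i v)
  show ?case using mstep.cancel[of "u @ u'" i "v @ z"] by simp
next
  case (kill i j u' v)
  then show ?case using mstep.kill[of i j "u @ u'" "v @ z"] by simp
next
  case (unit u' i v)
  show ?case using mstep.unit[of "u @ u'" i "v @ z"] by simp
qed

lemma mstep_rtrancl_in_context:
  "mstep\<^sup>*\<^sup>* a b \<Longrightarrow> mstep\<^sup>*\<^sup>* (map_option (\<lambda>w. u @ w @ z) a) (map_option (\<lambda>w. u @ w @ z) b)"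
  by (induction rule: rtranclp_induct) (auto intro: rtranclp.rtrancl_into_rtrancl mstep_in_context)

lemma mstep_rtrancl_reduce_step:
  "mstep\<^sup>*\<^sup>* (map_option (\<lambda>st. rev st @ [c]) s) (map_option rev (reduce_step s c))"
proof (cases s)
  case (Some st)
  show ?thesis
  proof (cases c)
    case (One i)
    then show ?thesis using Some mstep.unit[of "rev st" i "[]"] by auto
  next
    case (Rho j)
    show ?thesis
    proof (cases "\<exists>i r. st = Lam i # r")
      case True
      then obtain i r where "st = Lam i # r" by blast
      then show ?thesis using Some Rho mstep.cancel[of "rev r" i "[]"] mstep.kill[of i j "rev r" "[]"]
        by auto
    next
      case False
      then have "reduce_step s c = Some (Rho j # st)"
        using Some Rho by (auto split: list.split letter.split)
      then show ?thesis using Some Rho by simp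
    qed
  qed (use Some in simp)
qed simp

lemma mstep_rtrancl_reduce: "mstep\<^sup>*\<^sup>* (Some w) (map_option rev (reduce w))"
proof (induction w rule: rev_induct)
  case Nil
  then show ?case by (simp add: reduce_def)
next
  case (snoc c w)
  have "mstep\<^sup>*\<^sup>* (Some (w @ [c])) (map_option (\<lambda>st. rev st @ [c]) (reduce w))"
    using mstep_rtrancl_in_context[OF snoc, of "[]" "[c]"] by (simp add: option.map_comp comp_def)
  also have "mstep\<^sup>*\<^sup>* \<dots> (map_option rev (reduce (w @ [c])))"
    unfolding reduce_snoc by (rule mstep_rtrancl_reduce_step)
  finally show ?case .
qed

lemma red_zero_iff_reduce_None: "red_zero w \<longleftrightarrow> reduce w = None"
proof
  assume "red_zero w"
  then have "Option.bind (Some w) reduce = Option.bind None reduce"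
    unfolding red_zero_def by (rule equivclp_mstep_reduce_invariant)
  then show "reduce w = None" by simp
next
  assume "reduce w = None"
  then have "mstep\<^sup>*\<^sup>* (Some w) None"
    using mstep_rtrancl_reduce[of w] by simp
  then show "red_zero w"
    unfolding red_zero_def by (rule rtranclp_into_equivclp)
qed

lemma reduce_infix_not_None:
  assumes "reduce (u @ v @ z) \<noteq> None"
  shows "reduce v \<noteq> None"
proof
  assume "reduce v = None"
  then have "mstep\<^sup>*\<^sup>* (Some (u @ v @ z)) None"
    using mstep_rtrancl_in_context[OF mstep_rtrancl_reduce[of v], of u z] by simp
  then have "red_zero (u @ v @ z)"
    unfolding red_zero_def by (rule rtranclp_into_equivclp)
  with assms show False
    by (simp add: red_zero_iff_reduce_None)
qed

section \<open>Words all of whose powers are nonzero\<close>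

definition word_pow :: "'a list \<Rightarrow> nat \<Rightarrow> 'a list" where
  "word_pow w k = concat (replicate k w)"

lemma length_word_pow [simp]: "length (word_pow w k) = k * length w"
  by (induction k) (auto simp: word_pow_def)

lemma set_word_pow: "set (word_pow w k) \<subseteq> set w"
  by (auto simp: word_pow_def)

lemma word_pow_Suc_swap: "word_pow (u @ v) (Suc k) = u @ word_pow (v @ u) k @ v"
  by (induction k) (auto simp: word_pow_def)

lemma nth_word_pow: "s < k * length w \<Longrightarrow> word_pow w k ! s = w ! (s mod length w)"
proof (induction k arbitrary: s)
  case (Suc k)
  show ?case
  proof (cases "s < length w")
    case False
    then have "word_pow w k ! (s - length w) = w ! (s mod length w)"
      using Suc by (simp add: le_mod_geq)
    then show ?thesis
      using False by (simp add: word_pow_def nth_append)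
  qed (simp add: word_pow_def nth_append)
qed simp

definition nonzero_powers :: "letter list \<Rightarrow> bool" where
  "nonzero_powers w \<longleftrightarrow> (\<forall>k. reduce (word_pow w k) \<noteq> None)"

lemma nonzero_powers_swap_imp:
  assumes "nonzero_powers (u @ v)"
  shows "nonzero_powers (v @ u)"
  unfolding nonzero_powers_def
proof
  fix k
  have "reduce (word_pow (u @ v) (Suc k)) \<noteq> None"
    using assms unfolding nonzero_powers_def by blast
  then have "reduce (u @ word_pow (v @ u) k @ v) \<noteq> None"
    unfolding word_pow_Suc_swap .
  then show "reduce (word_pow (v @ u) k) \<noteq> None"
    by (rule reduce_infix_not_None)
qed

lemma nonzero_powers_swap: "nonzero_powers (u @ v) \<longleftrightarrow> nonzero_powers (v @ u)"
  using nonzero_powers_swap_imp by blast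

lemma nonzero_powers_neutral_prefix:
  assumes "\<And>s. foldl reduce_step s u = s"
  shows "nonzero_powers (u @ w) \<longleftrightarrow> nonzero_powers w"
proof -
  have "foldl reduce_step s (word_pow (u @ w) k) = foldl reduce_step s (word_pow w k)" for s k
    by (induction k arbitrary: s) (simp_all add: word_pow_def assms)
  then show ?thesis
    by (simp add: nonzero_powers_def reduce_def)
qed

lemma nonzero_powers_One_Cons: "nonzero_powers (One i # w) \<longleftrightarrow> nonzero_powers w"
  using nonzero_powers_neutral_prefix[of "[One i]"] by simp

lemma nonzero_powers_Lam_Rho_Cons:
  "nonzero_powers (Lam i # Rho j # w) \<longleftrightarrow> i = j \<and> nonzero_powers w"
proof (cases "i = j")
  case True
  then show ?thesis
    using nonzero_powers_neutral_prefix[of "[Lam i, Rho i]"] by (simp add: reduce_step_Lam_Rho)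
next
  case False
  then have "reduce (word_pow (Lam i # Rho j # w) 1) = None"
    by (simp add: word_pow_def reduce_def reduce_step_Lam_Rho)
  then show ?thesis
    using False nonzero_powers_def by blast
qed

section \<open>Periodic points as words\<close>

definition periodic_extension :: "'a list \<Rightarrow> int \<Rightarrow> 'a" where
  "periodic_extension w k = w ! nat (k mod int (length w))"

lemma periodic_extension_nth: "i < length w \<Longrightarrow> periodic_extension w (int i) = w ! i"
  by (simp add: periodic_extension_def)

lemma periodic_extension_in_set: "w \<noteq> [] \<Longrightarrow> periodic_extension w k \<in> set w"
  by (simp add: periodic_extension_def nat_less_iff)

lemma map_periodic_extension_upto:
  assumes "w \<noteq> []" and "nat (i mod int (length w)) + L \<le> K * length w"
  shows "map (periodic_extension w) [i..i + int L - 1] =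
    take L (drop (nat (i mod int (length w))) (word_pow w K))"
proof (rule nth_equalityI)
  define r where "r = nat (i mod int (length w))"
  show "length (map (periodic_extension w) [i..i + int L - 1]) =
      length (take L (drop (nat (i mod int (length w))) (word_pow w K)))"
    using assms by simp
  fix t
  assume "t < length (map (periodic_extension w) [i..i + int L - 1])"
  then have t: "t < L" by simp
  have "int ((r + t) mod length w) = (i + int t) mod int (length w)"
    using assms(1) by (simp add: r_def zmod_int mod_add_left_eq)
  then have "nat ((i + int t) mod int (length w)) = (r + t) mod length w"
    by (metis nat_int)
  then have "periodic_extension w (i + int t) = w ! ((r + t) mod length w)"
    by (simp add: periodic_extension_def)
  also have "\<dots> = word_pow w K ! (r + t)"
    using assms(2) t by (simp add: r_def nth_word_pow)
  finally show "map (periodic_extension w) [i..i + int L - 1] ! t =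
      take L (drop (nat (i mod int (length w))) (word_pow w K)) ! t"
    using assms(2) t by (simp add: r_def nth_upto)
qed

lemma word_pow_eq_map_periodic_extension:
  "w \<noteq> [] \<Longrightarrow> word_pow w K = map (periodic_extension w) [0..int (K * length w) - 1]"
  using map_periodic_extension_upto[of w 0 "K * length w" K] by simp

lemma infix_of_word_pow:
  assumes "w \<noteq> []" and "i \<le> j"
  obtains u z K where "word_pow w K = u @ map (periodic_extension w) [i..j] @ z"
proof -
  define r L where "r = nat (i mod int (length w))" and "L = nat (j - i + 1)"
  define K where "K = r + L"
  have "r + L \<le> K * length w"
    using assms by (simp add: K_def Suc_le_eq)
  then have "map (periodic_extension w) [i..j] = take L (drop r (word_pow w K))"
    using map_periodic_extension_upto[OF assms(1), of i L K] assms(2) by (simp add: r_def L_def)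
  then show thesis
    using that[of K "take r (word_pow w K)" "drop L (drop r (word_pow w K))"]
    by (simp del: drop_drop)
qed

lemma periodic_extension_in_motzkin_shift_iff:
  assumes "w \<noteq> []"
  shows "periodic_extension w \<in> motzkin_shift M N \<longleftrightarrow> set w \<subseteq> Sigma M N \<and> nonzero_powers w"
proof
  assume x: "periodic_extension w \<in> motzkin_shift M N"
  have "set w \<subseteq> Sigma M N"
  proof
    fix c
    assume "c \<in> set w"
    then obtain i where i: "i < length w" "c = w ! i"
      by (auto simp: in_set_conv_nth)
    have "periodic_extension w (int i) \<in> Sigma M N"
      using x by (simp add: motzkin_shift_def)
    then show "c \<in> Sigma M N"
      using i by (simp add: periodic_extension_nth)
  qed
  moreover have "reduce (word_pow w K) \<noteq> None" for K
  proof (cases "K = 0")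
    case False
    then show ?thesis
      using x assms by (auto simp: motzkin_shift_def red_zero_iff_reduce_None
          word_pow_eq_map_periodic_extension)
  qed (simp add: word_pow_def reduce_def)
  ultimately show "set w \<subseteq> Sigma M N \<and> nonzero_powers w"
    by (simp add: nonzero_powers_def)
next
  assume w: "set w \<subseteq> Sigma M N \<and> nonzero_powers w"
  have "\<not> red_zero (map (periodic_extension w) [i..j])" if ij: "i \<le> j" for i j
  proof -
    obtain u z K where factor: "word_pow w K = u @ map (periodic_extension w) [i..j] @ z"
      using infix_of_word_pow[OF assms ij] .
    have "reduce (word_pow w K) \<noteq> None"
      using w unfolding nonzero_powers_def by blast
    then show ?thesis
      unfolding factor red_zero_iff_reduce_None by (rule reduce_infix_not_None)
  qed
  moreover have "periodic_extension w k \<in> Sigma M N" for k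
    using w periodic_extension_in_set[OF assms, of k] by blast
  ultimately show "periodic_extension w \<in> motzkin_shift M N"
    by (simp add: motzkin_shift_def)
qed

lemma periodic_eq_periodic_extension:
  assumes periodic: "\<forall>k. x (k + int n) = x k" and "n \<ge> 1"
  shows "x = periodic_extension (map (\<lambda>i. x (int i)) [0..<n])"
proof
  fix k
  have shift: "x (k + int n * m) = x k" for m
  proof (induction m rule: int_induct[where k = 0])
    case (step1 m)
    then show ?case using periodic[rule_format, of "k + int n * m"] by (simp add: algebra_simps)
  next
    case (step2 m)
    then show ?case using periodic[rule_format, of "k + int n * (m - 1)"] by (simp add: algebra_simps)
  qed simp
  have "x k = x (k mod int n)"
    using shift[of "- (k div int n)"] by (simp add: minus_mult_div_eq_mod)
  then show "x k = periodic_extension (map (\<lambda>i. x (int i)) [0..<n]) k"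
    using assms(2) by (simp add: periodic_extension_def nat_less_iff)
qed

lemma periodic_points_eq_image:
  assumes "n \<ge> 1"
  shows "{x \<in> motzkin_shift M N. \<forall>k. x (k + int n) = x k} =
    periodic_extension ` {w. length w = n \<and> set w \<subseteq> Sigma M N \<and> nonzero_powers w}"
proof (intro set_eqI iffI)
  fix x
  assume x: "x \<in> {x \<in> motzkin_shift M N. \<forall>k. x (k + int n) = x k}"
  define w where "w = map (\<lambda>i. x (int i)) [0..<n]"
  have x_eq: "x = periodic_extension w"
    using x assms periodic_eq_periodic_extension[of x n] by (simp add: w_def)
  have "length w = n" "w \<noteq> []"
    using assms by (simp_all add: w_def)
  moreover have "set w \<subseteq> Sigma M N \<and> nonzero_powers w"
    using x periodic_extension_in_motzkin_shift_iff[OF \<open>w \<noteq> []\<close>] by (simp add: x_eq)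
  ultimately show "x \<in> periodic_extension ` {w. length w = n \<and> set w \<subseteq> Sigma M N \<and> nonzero_powers w}"
    unfolding x_eq by (intro imageI) simp
next
  fix x
  assume "x \<in> periodic_extension ` {w. length w = n \<and> set w \<subseteq> Sigma M N \<and> nonzero_powers w}"
  then obtain w where w: "length w = n" "set w \<subseteq> Sigma M N" "nonzero_powers w"
      and x_eq: "x = periodic_extension w"
    by blast
  have "w \<noteq> []"
    using w(1) assms by auto
  then have "x \<in> motzkin_shift M N"
    using w by (simp add: x_eq periodic_extension_in_motzkin_shift_iff)
  moreover have "x (k + int n) = x k" for k
    using w(1) by (simp add: x_eq periodic_extension_def)
  ultimately show "x \<in> {x \<in> motzkin_shift M N. \<forall>k. x (k + int n) = x k}"
    by simp
qed

lemma periodic_points_eq_card_words: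
  assumes "n \<ge> 1"
  shows "periodic_points M N n = card {w. length w = n \<and> set w \<subseteq> Sigma M N \<and> nonzero_powers w}"
proof -
  have "inj_on periodic_extension {w. length w = n}"
  proof (rule inj_onI)
    fix v w
    assume "v \<in> {w. length w = n}" "w \<in> {w. length w = n}"
      and eq: "periodic_extension v = periodic_extension w"
    then show "v = w"
      using periodic_extension_nth[of _ v] periodic_extension_nth[of _ w]
      by (intro nth_equalityI) auto
  qed
  then have "inj_on periodic_extension {w. length w = n \<and> set w \<subseteq> Sigma M N \<and> nonzero_powers w}"
    by (rule inj_on_subset) blast
  then show ?thesis
    unfolding periodic_points_def periodic_points_eq_image[OF assms] by (rule card_image)
qed

section \<open>Counting words by their pattern of letter kinds\<close>

datatype letter_kind = KLam | KRho | KOne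

fun kind :: "letter \<Rightarrow> letter_kind" where
  "kind (Lam i) = KLam" | "kind (Rho i) = KRho" | "kind (One i) = KOne"

lemma foldl_reduce_step_no_Rho:
  "\<forall>c\<in>set w. kind c \<noteq> KRho \<Longrightarrow> foldl reduce_step (Some st) w \<noteq> None"
proof (induction w arbitrary: st)
  case (Cons c w)
  then show ?case by (cases c) auto
qed simp

lemma foldl_reduce_step_no_Lam:
  "\<forall>c\<in>set w \<union> set st. kind c \<noteq> KLam \<Longrightarrow> foldl reduce_step (Some st) w \<noteq> None"
proof (induction w arbitrary: st)
  case (Cons c w)
  show ?case
  proof (cases c)
    case (Rho j)
    have "reduce_step (Some st) (Rho j) = Some (Rho j # st)"
      using Cons.prems by (cases st; cases "hd st") auto
    then show ?thesis
      using Cons Rho by auto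
  qed (use Cons in auto)
qed simp

lemma nonzero_powers_single_kind:
  assumes "\<forall>c\<in>set w. kind c = k" and "k \<noteq> KOne"
  shows "nonzero_powers w"
  unfolding nonzero_powers_def reduce_def
proof
  fix m
  have "\<forall>c\<in>set (word_pow w m). kind c = k"
    using assms(1) set_word_pow[of w m] by auto
  then show "foldl reduce_step (Some []) (word_pow w m) \<noteq> None"
    using assms(2) foldl_reduce_step_no_Rho foldl_reduce_step_no_Lam
    by (cases k) auto
qed

lemma letter_in_Sigma_iff [simp]:
  "Lam i \<in> Sigma M N \<longleftrightarrow> i \<in> {1..M}"
  "Rho i \<in> Sigma M N \<longleftrightarrow> i \<in> {1..M}"
  "One i \<in> Sigma M N \<longleftrightarrow> i \<in> {1..N}"
  by (auto simp: Sigma_def)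

definition letters_of_kind :: "nat \<Rightarrow> nat \<Rightarrow> letter_kind \<Rightarrow> letter set" where
  "letters_of_kind M N k = {c \<in> Sigma M N. kind c = k}"

lemma letters_of_kind_eq:
  "letters_of_kind M N KLam = Lam ` {1..M}"
  "letters_of_kind M N KRho = Rho ` {1..M}"
  "letters_of_kind M N KOne = One ` {1..N}"
  by (auto simp: letters_of_kind_def elim: kind.elims)

lemma finite_letters_of_kind: "finite (letters_of_kind M N k)"
  by (cases k) (simp_all add: letters_of_kind_eq)

lemma card_letters_of_kind: "card (letters_of_kind M N k) = (if k = KOne then N else M)"
  by (cases k) (simp_all add: letters_of_kind_eq card_image inj_on_def)

definition admissible_words :: "nat \<Rightarrow> nat \<Rightarrow> letter_kind list \<Rightarrow> letter list set" where
  "admissible_words M N p = {w. map kind w = p \<and> set w \<subseteq> Sigma M N \<and> nonzero_powers w}"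

lemma finite_admissible_words: "finite (admissible_words M N p)"
proof (rule finite_subset)
  show "admissible_words M N p \<subseteq> {w. set w \<subseteq> Sigma M N \<and> length w = length p}"
    by (auto simp: admissible_words_def dest: arg_cong[where f = length])
  have "Sigma M N = Lam ` {1..M} \<union> Rho ` {1..M} \<union> One ` {1..N}"
    by (auto simp: Sigma_def)
  then show "finite {w. set w \<subseteq> Sigma M N \<and> length w = length p}"
    by (intro finite_lists_length_eq) simp
qed

lemma bij_betw_admissible_words_swap:
  "bij_betw (\<lambda>w. drop (length us) w @ take (length us) w)
     (admissible_words M N (us @ vs)) (admissible_words M N (vs @ us))"
proof (rule bij_betw_byWitness[where f' = "\<lambda>w. drop (length vs) w @ take (length vs) w"])
  have split: "\<exists>a b. w = a @ b \<and> map kind a = xs \<and> map kind b = ys"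
    if "map kind w = xs @ ys" for w and xs ys :: "letter_kind list"
    using that by (force simp: map_eq_append_conv)
  show "\<forall>w\<in>admissible_words M N (us @ vs). drop (length vs) (drop (length us) w @ take (length us) w)
      @ take (length vs) (drop (length us) w @ take (length us) w) = w"
    by (auto simp: admissible_words_def dest!: split)
  show "\<forall>w\<in>admissible_words M N (vs @ us). drop (length us) (drop (length vs) w @ take (length vs) w)
      @ take (length us) (drop (length vs) w @ take (length vs) w) = w"
    by (auto simp: admissible_words_def dest!: split)
  show "(\<lambda>w. drop (length us) w @ take (length us) w) ` admissible_words M N (us @ vs)
      \<subseteq> admissible_words M N (vs @ us)"
    by (auto simp: admissible_words_def nonzero_powers_swap dest!: split)
  show "(\<lambda>w. drop (length vs) w @ take (length vs) w) ` admissible_words M N (vs @ us)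
      \<subseteq> admissible_words M N (us @ vs)"
    by (auto simp: admissible_words_def nonzero_powers_swap dest!: split)
qed

lemma card_admissible_words_swap:
  "card (admissible_words M N (us @ vs)) = card (admissible_words M N (vs @ us))"
  using bij_betw_admissible_words_swap by (rule bij_betw_same_card)

lemma admissible_words_One_Cons:
  "admissible_words M N (KOne # p) =
     (\<lambda>(c, w). c # w) ` (letters_of_kind M N KOne \<times> admissible_words M N p)"
proof (intro set_eqI iffI)
  fix w
  assume "w \<in> admissible_words M N (KOne # p)"
  then obtain c v where "w = c # v" "kind c = KOne" "c \<in> Sigma M N" "v \<in> admissible_words M N p"
    by (cases w) (auto simp: admissible_words_def elim!: kind.elims simp: nonzero_powers_One_Cons)
  then show "w \<in> (\<lambda>(c, w). c # w) ` (letters_of_kind M N KOne \<times> admissible_words M N p)"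
    by (auto simp: letters_of_kind_def)
next
  fix w
  assume "w \<in> (\<lambda>(c, w). c # w) ` (letters_of_kind M N KOne \<times> admissible_words M N p)"
  then show "w \<in> admissible_words M N (KOne # p)"
    by (auto simp: admissible_words_def letters_of_kind_eq nonzero_powers_One_Cons)
qed

lemma admissible_words_Lam_Rho_Cons:
  "admissible_words M N (KLam # KRho # p) =
     (\<lambda>(i, w). Lam i # Rho i # w) ` ({1..M} \<times> admissible_words M N p)"
proof (intro set_eqI iffI)
  fix w
  assume "w \<in> admissible_words M N (KLam # KRho # p)"
  then obtain i j v where "w = Lam i # Rho j # v" "Lam i \<in> Sigma M N" "set v \<subseteq> Sigma M N"
      "map kind v = p" "nonzero_powers w"
    by (auto simp: admissible_words_def Cons_eq_map_conv elim!: kind.elims)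
  then show "w \<in> (\<lambda>(i, w). Lam i # Rho i # w) ` ({1..M} \<times> admissible_words M N p)"
    by (auto simp: admissible_words_def nonzero_powers_Lam_Rho_Cons)
next
  fix w
  assume "w \<in> (\<lambda>(i, w). Lam i # Rho i # w) ` ({1..M} \<times> admissible_words M N p)"
  then show "w \<in> admissible_words M N (KLam # KRho # p)"
    by (auto simp: admissible_words_def nonzero_powers_Lam_Rho_Cons)
qed

lemma admissible_words_replicate:
  assumes "k \<noteq> KOne"
  shows "admissible_words M N (replicate n k) = {w. set w \<subseteq> letters_of_kind M N k \<and> length w = n}"
proof -
  have "map kind w = replicate n k \<longleftrightarrow> length w = n \<and> (\<forall>c\<in>set w. kind c = k)" for w
  proof
    assume h: "map kind w = replicate n k"
    show "length w = n \<and> (\<forall>c\<in>set w. kind c = k)"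
      using arg_cong[OF h, of length] arg_cong[OF h, of set] by (auto split: if_splits)
  qed (auto intro: replicate_eqI)
  then show ?thesis
    using assms by (auto simp: admissible_words_def letters_of_kind_def intro: nonzero_powers_single_kind)
qed

lemma card_admissible_words_One_Cons:
  "card (admissible_words M N (KOne # p)) = N * card (admissible_words M N p)"
proof -
  have "inj_on (\<lambda>(c, w). c # w) (letters_of_kind M N KOne \<times> admissible_words M N p)"
    by (auto simp: inj_on_def)
  then show ?thesis
    by (simp add: admissible_words_One_Cons card_image card_cartesian_product card_letters_of_kind)
qed

lemma card_admissible_words_Lam_Rho_Cons:
  "card (admissible_words M N (KLam # KRho # p)) = M * card (admissible_words M N p)"
proof -
  have "inj_on (\<lambda>(i, w). Lam i # Rho i # w) ({1..M} \<times> admissible_words M N p)"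
    by (auto simp: inj_on_def)
  then show ?thesis
    by (simp add: admissible_words_Lam_Rho_Cons card_image card_cartesian_product)
qed

lemma card_admissible_words_replicate:
  "k \<noteq> KOne \<Longrightarrow> card (admissible_words M N (replicate n k)) = M ^ n"
  by (simp add: admissible_words_replicate card_lists_length_eq card_letters_of_kind
      finite_letters_of_kind)

lemma Cons_eq_append_adjacent:
  assumes "set xs \<subseteq> {a, b}" and "b \<in> set xs" and "a \<noteq> b"
  shows "\<exists>ys zs. a # xs = ys @ a # b # zs"
  using assms
proof (induction xs)
  case (Cons x xs)
  show ?case
  proof (cases "x = b")
    case True
    then show ?thesis by blast
  next
    case False
    then obtain ys zs where "a # xs = ys @ a # b # zs"
      using Cons by auto
    then have "a # x # xs = (a # ys) @ a # b # zs"
      using False Cons.prems(1) by auto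
    then show ?thesis by blast
  qed
qed simp

lemma kind_pattern_cases:
  fixes p :: "letter_kind list"
  obtains (One) us vs where "p = us @ KOne # vs"
  | (Lam_Rho) us vs ys zs where "p = us @ vs" "vs @ us = ys @ KLam # KRho # zs"
  | (single_kind) k n where "k \<noteq> KOne" "p = replicate n k"
proof (cases "KOne \<in> set p")
  case True
  then show thesis using One by (meson split_list)
next
  case no_One: False
  show thesis
  proof (cases "KLam \<in> set p \<and> KRho \<in> set p")
    case True
    then obtain us vs where p: "p = us @ KLam # vs"
      by (meson split_list)
    have "c \<in> {KLam, KRho}" if "c \<in> set (vs @ us)" for c
      using no_One p that by (cases c) auto
    moreover have "KRho \<in> set (vs @ us)"
      using True p by auto
    ultimately obtain ys zs where "KLam # vs @ us = ys @ KLam # KRho # zs"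
      using Cons_eq_append_adjacent[of "vs @ us" KLam KRho] by auto
    then show thesis using Lam_Rho[of us "KLam # vs"] p by simp
  next
    case False
    define k where "k = (if KLam \<in> set p then KLam else KRho)"
    have "c = k" if "c \<in> set p" for c
      using no_One False that by (cases c) (auto simp: k_def)
    then show thesis
      using single_kind[of k "length p"] replicate_length_same[of p k] by (auto simp: k_def)
  qed
qed

definition kind_weight :: "nat \<Rightarrow> nat \<Rightarrow> letter_kind list \<Rightarrow> nat" where
  "kind_weight M N p =
     M ^ max (count_list p KLam) (count_list p KRho) * N ^ count_list p KOne"

lemma kind_weight_swap: "kind_weight M N (us @ vs) = kind_weight M N (vs @ us)"
  by (simp add: kind_weight_def add.commute)

lemma count_list_replicate: "count_list (replicate n x) y = (if x = y then n else 0)"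
  by (induction n) auto

lemma card_admissible_words: "card (admissible_words M N p) = kind_weight M N p"
proof (induction "length p" arbitrary: p rule: less_induct)
  case less
  show ?case
  proof (cases p rule: kind_pattern_cases)
    case (One us vs)
    have "card (admissible_words M N p) = card (admissible_words M N (KOne # vs @ us))"
      using One card_admissible_words_swap[of M N us "KOne # vs"] by simp
    also have "\<dots> = N * kind_weight M N (vs @ us)"
      using One less by (simp add: card_admissible_words_One_Cons)
    also have "\<dots> = kind_weight M N (KOne # vs @ us)"
      by (simp add: kind_weight_def)
    also have "\<dots> = kind_weight M N p"
      using One kind_weight_swap[of M N us "KOne # vs"] by simp
    finally show ?thesis .
  next
    case (Lam_Rho us vs ys zs)
    have "length (vs @ us) = length (ys @ KLam # KRho # zs)"
      using Lam_Rho(2) by simp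
    then have shorter: "length (zs @ ys) < length p"
      using Lam_Rho(1) by simp
    have "card (admissible_words M N p) = card (admissible_words M N (KLam # KRho # zs @ ys))"
      using Lam_Rho card_admissible_words_swap[of M N us vs]
        card_admissible_words_swap[of M N ys "KLam # KRho # zs"] by simp
    also have "\<dots> = M * kind_weight M N (zs @ ys)"
      using less shorter by (simp add: card_admissible_words_Lam_Rho_Cons)
    also have "\<dots> = kind_weight M N (KLam # KRho # zs @ ys)"
      by (simp add: kind_weight_def)
    also have "\<dots> = kind_weight M N p"
      using Lam_Rho kind_weight_swap[of M N us vs] kind_weight_swap[of M N ys "KLam # KRho # zs"]
      by simp
    finally show ?thesis .
  next
    case (single_kind k n)
    then show ?thesis
      by (cases k) (auto simp: kind_weight_def count_list_replicate card_admissible_words_replicate)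
  qed
qed

section \<open>Summing over all patterns\<close>

lemma UNIV_letter_kind: "UNIV = {KLam, KRho, KOne}"
  using letter_kind.exhaust by auto

lemma finite_kind_patterns: "finite {p :: letter_kind list. length p = n}"
proof -
  have "finite (UNIV :: letter_kind set)"
    by (simp add: UNIV_letter_kind)
  then show ?thesis
    using finite_lists_length_eq[of "UNIV :: letter_kind set" n] by simp
qed

lemma card_words_eq_sum_kind_weight:
  "card {w. length w = n \<and> set w \<subseteq> Sigma M N \<and> nonzero_powers w} =
     (\<Sum>p | length p = n. kind_weight M N p)"
proof -
  have "{w. length w = n \<and> set w \<subseteq> Sigma M N \<and> nonzero_powers w} =
      (\<Union>p \<in> {p. length p = n}. admissible_words M N p)"
    by (auto simp: admissible_words_def)
  also have "card \<dots> = (\<Sum>p | length p = n. card (admissible_words M N p))"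
  proof (rule card_UN_disjoint[OF finite_kind_patterns])
    show "\<forall>p\<in>{p. length p = n}. finite (admissible_words M N p)"
      by (simp add: finite_admissible_words)
  qed (auto simp: admissible_words_def)
  finally show ?thesis
    by (simp add: card_admissible_words)
qed

lemma sum_kind_patterns_Suc:
  "(\<Sum>p | length p = Suc n. f p) =
     (\<Sum>p | length p = n. f (KLam # p) + f (KRho # p) + f (KOne # p))"
proof -
  have "(\<Sum>p | length p = Suc n. f p) = sum f ((\<lambda>(c, p). c # p) ` (UNIV \<times> {p. length p = n}))"
    by (rule arg_cong[where f = "sum f"]) (auto simp: length_Suc_conv)
  also have "\<dots> = (\<Sum>(c, p) \<in> UNIV \<times> {p. length p = n}. f (c # p))"
    by (subst sum.reindex) (auto simp: inj_on_def case_prod_unfold)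
  also have "\<dots> = (\<Sum>c \<in> UNIV. \<Sum>p | length p = n. f (c # p))"
    by (simp add: sum.cartesian_product)
  also have "\<dots> = (\<Sum>p | length p = n. f (KLam # p) + f (KRho # p) + f (KOne # p))"
    by (simp add: UNIV_letter_kind sum.distrib add.assoc)
  finally show ?thesis .
qed

lemma sum_binomial_Suc:
  fixes F :: "nat \<Rightarrow> 'a :: comm_semiring_1"
  shows "(\<Sum>k=0..Suc m. of_nat (Suc m choose k) * F k) = (\<Sum>k=0..m. of_nat (m choose k) * (F k + F (Suc k)))"
proof -
  have shift: "(\<Sum>k=0..Suc m. of_nat (Suc m choose k) * F k) =
      F 0 + (\<Sum>k=0..m. of_nat (Suc m choose Suc k) * F (Suc k))"
    by (subst sum.atLeast0_atMost_Suc_shift) simp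
  have "(\<Sum>k=0..m. of_nat (m choose k) * F k) = (\<Sum>k=0..Suc m. of_nat (m choose k) * F k)"
    by (simp add: binomial_eq_0)
  also have "\<dots> = F 0 + (\<Sum>k=0..m. of_nat (m choose Suc k) * F (Suc k))"
    by (subst sum.atLeast0_atMost_Suc_shift) simp
  finally show ?thesis
    unfolding shift by (simp add: sum.distrib algebra_simps)
qed

definition binomial_sum :: "nat \<Rightarrow> (nat \<Rightarrow> nat \<Rightarrow> 'a :: comm_semiring_1) \<Rightarrow> 'a" where
  "binomial_sum m h = (\<Sum>a=0..m. of_nat (m choose a) * h a (m - a))"

definition trinomial_sum :: "nat \<Rightarrow> (nat \<Rightarrow> nat \<Rightarrow> nat \<Rightarrow> 'a :: comm_semiring_1) \<Rightarrow> 'a" where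
  "trinomial_sum n g = (\<Sum>c=0..n. of_nat (n choose c) * binomial_sum (n - c) (\<lambda>a b. g a b c))"

lemma binomial_sum_Suc:
  "binomial_sum (Suc m) h = binomial_sum m (\<lambda>a b. h (Suc a) b) + binomial_sum m (\<lambda>a b. h a (Suc b))"
proof -
  have "binomial_sum (Suc m) h = (\<Sum>a=0..m. of_nat (m choose a) * (h a (Suc m - a) + h (Suc a) (m - a)))"
    unfolding binomial_sum_def by (subst sum_binomial_Suc) simp
  also have "\<dots> = (\<Sum>a=0..m. of_nat (m choose a) * (h (Suc a) (m - a) + h a (Suc (m - a))))"
    by (intro sum.cong refl) (simp add: Suc_diff_le add.commute)
  finally show ?thesis
    by (simp add: binomial_sum_def sum.distrib algebra_simps)
qed

lemma trinomial_sum_Suc: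
  "trinomial_sum (Suc n) g = trinomial_sum n (\<lambda>a b c. g (Suc a) b c)
     + trinomial_sum n (\<lambda>a b c. g a (Suc b) c) + trinomial_sum n (\<lambda>a b c. g a b (Suc c))"
proof -
  have "trinomial_sum (Suc n) g = (\<Sum>c=0..n. of_nat (n choose c) *
      (binomial_sum (Suc (n - c)) (\<lambda>a b. g a b c) + binomial_sum (n - c) (\<lambda>a b. g a b (Suc c))))"
    unfolding trinomial_sum_def by (subst sum_binomial_Suc) (intro sum.cong refl, simp add: Suc_diff_le)
  then show ?thesis
    by (simp add: trinomial_sum_def binomial_sum_Suc sum.distrib algebra_simps)
qed

lemma sum_kind_patterns_eq_trinomial_sum:
  "(\<Sum>p | length p = n. g (count_list p KLam) (count_list p KRho) (count_list p KOne)) =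
     trinomial_sum n g"
proof (induction n arbitrary: g)
  case 0
  then show ?case by (simp add: trinomial_sum_def binomial_sum_def)
next
  case (Suc n)
  show ?case
    using Suc.IH[of "\<lambda>a b c. g (Suc a) b c"] Suc.IH[of "\<lambda>a b c. g a (Suc b) c"]
      Suc.IH[of "\<lambda>a b c. g a b (Suc c)"]
    by (simp add: sum_kind_patterns_Suc trinomial_sum_Suc sum.distrib)
qed

definition half_binomial_sum :: "'a :: comm_semiring_1 \<Rightarrow> nat \<Rightarrow> 'a" where
  "half_binomial_sum x m = (\<Sum>a=0..m div 2. of_nat (m choose a) * x ^ a)"

lemma sum_upper_half_binomial:
  fixes x :: "'a :: comm_ring_1"
  shows "(\<Sum>a=0..m. if m < 2 * a then of_nat (m choose a) * x ^ a else 0) =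
    (x + 1) ^ m - half_binomial_sum x m"
proof -
  define T where "T a = of_nat (m choose a) * x ^ a" for a
  have "{a \<in> {0..m}. \<not> m < 2 * a} = {0..m div 2}"
    by auto
  then have "(\<Sum>a=0..m. if \<not> m < 2 * a then T a else 0) = half_binomial_sum x m"
    using sum.inter_filter[of "{0..m}" T "\<lambda>a. \<not> m < 2 * a"] by (simp add: T_def half_binomial_sum_def)
  moreover have "(x + 1) ^ m = (\<Sum>a=0..m. T a)"
    using binomial_ring[of x 1 m] by (simp add: T_def atLeast0AtMost)
  moreover have "(\<Sum>a=0..m. T a) =
      (\<Sum>a=0..m. if m < 2 * a then T a else 0) + (\<Sum>a=0..m. if \<not> m < 2 * a then T a else 0)"
    unfolding sum.distrib[symmetric] by (intro sum.cong refl) auto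
  ultimately show ?thesis
    unfolding T_def by (simp add: algebra_simps)
qed

lemma binomial_sum_max_power:
  fixes x :: "'a :: comm_ring_1"
  shows "binomial_sum m (\<lambda>a b. x ^ max a b) =
    2 * ((x + 1) ^ m - half_binomial_sum x m)
    + (if even m then of_nat (m choose (m div 2)) * x ^ (m div 2) else 0)"
proof -
  define T where "T a = of_nat (m choose a) * x ^ a" for a
  have max_eq: "max a (m - a) = (if m \<le> 2 * a then a else m - a)" for a
    by (auto simp: max_def)
  have "binomial_sum m (\<lambda>a b. x ^ max a b) =
      (\<Sum>a=0..m. if m \<le> 2 * a then T a else 0)
      + (\<Sum>a=0..m. if 2 * a < m then of_nat (m choose a) * x ^ (m - a) else 0)"
    unfolding binomial_sum_def sum.distrib[symmetric]
    by (intro sum.cong refl) (simp add: T_def max_eq)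
  also have "(\<Sum>a=0..m. if 2 * a < m then of_nat (m choose a) * x ^ (m - a) else 0) =
      (\<Sum>a=0..m. if m < 2 * a then T a else 0)"
    by (subst sum.atLeastAtMost_rev) (intro sum.cong refl, auto simp: T_def binomial_symmetric[symmetric])
  also have "(\<Sum>a=0..m. if m \<le> 2 * a then T a else 0) =
      (\<Sum>a=0..m. if m < 2 * a then T a else 0) + (\<Sum>a=0..m. if m = 2 * a then T a else 0)"
    unfolding sum.distrib[symmetric] by (intro sum.cong refl) auto
  also have "(\<Sum>a=0..m. if m = 2 * a then T a else 0) =
      (if even m then of_nat (m choose (m div 2)) * x ^ (m div 2) else 0)"
  proof -
    have "(\<Sum>a=0..m. if m = 2 * a then T a else 0) =
        (\<Sum>a=0..m. if a = m div 2 then (if even m then T a else 0) else 0)"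
      by (intro sum.cong refl) auto
    then show ?thesis
      by (simp add: T_def)
  qed
  finally show ?thesis
    unfolding T_def sum_upper_half_binomial by (simp add: algebra_simps)
qed

lemma trinomial_sum_max_power:
  fixes x y :: "'a :: comm_ring_1"
  defines "Z m \<equiv> if even m then of_nat (m choose (m div 2)) * x ^ (m div 2) else 0"
  shows "trinomial_sum n (\<lambda>a b c. x ^ max a b * y ^ c) =
    2 * ((x + y + 1) ^ n - (\<Sum>c=0..n. of_nat (n choose c) * y ^ c * half_binomial_sum x (n - c)))
    + (\<Sum>c=0..n. of_nat (n choose c) * y ^ c * Z (n - c))"
proof -
  define a where "a c = of_nat (n choose c) * y ^ c" for c
  have "trinomial_sum n (\<lambda>a b c. x ^ max a b * y ^ c) =
      (\<Sum>c=0..n. a c * binomial_sum (n - c) (\<lambda>a b. x ^ max a b))"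
    unfolding trinomial_sum_def binomial_sum_def a_def
    by (intro sum.cong refl) (simp add: sum_distrib_left sum_distrib_right algebra_simps)
  also have "\<dots> = (\<Sum>c=0..n. 2 * (a c * (x + 1) ^ (n - c))
      - 2 * (a c * half_binomial_sum x (n - c)) + a c * Z (n - c))"
    by (intro sum.cong refl) (simp add: binomial_sum_max_power Z_def algebra_simps)
  also have "\<dots> = 2 * (\<Sum>c=0..n. a c * (x + 1) ^ (n - c))
      - 2 * (\<Sum>c=0..n. a c * half_binomial_sum x (n - c)) + (\<Sum>c=0..n. a c * Z (n - c))"
    by (simp add: sum.distrib sum_subtractf sum_distrib_left)
  also have "(\<Sum>c=0..n. a c * (x + 1) ^ (n - c)) = (x + y + 1) ^ n"
    using binomial_ring[of y "x + 1" n] by (simp add: a_def atLeast0AtMost algebra_simps)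
  finally show ?thesis
    by (simp add: a_def algebra_simps)
qed

lemma sum_atLeastAtMost_parity_split:
  fixes h :: "nat \<Rightarrow> 'a :: comm_monoid_add"
  shows "(\<Sum>c=0..n. h c) = (\<Sum>i=0..n div 2. h (2 * i)) + (\<Sum>i<(n + 1) div 2. h (2 * i + 1))"
proof (induction n)
  case (Suc n)
  show ?case
  proof (cases "even n")
    case True
    then have "Suc n div 2 = n div 2" "(Suc n + 1) div 2 = Suc ((n + 1) div 2)"
        "(n + 1) div 2 = n div 2" "2 * (n div 2) + 1 = Suc n"
      by presburger+
    then show ?thesis
      using Suc by (simp add: add_ac)
  next
    case False
    then have "Suc n div 2 = Suc (n div 2)" "(Suc n + 1) div 2 = (n + 1) div 2"
        "2 * Suc (n div 2) = Suc n"
      by presburger+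
    then show ?thesis
      using Suc by (simp add: add_ac)
  qed
qed simp

lemma sum_central_binomial_terms:
  fixes x y :: "'a :: comm_semiring_1"
  shows "(\<Sum>c=0..n. of_nat (n choose c) * y ^ c *
      (if even (n - c) then of_nat (n - c choose ((n - c) div 2)) * x ^ ((n - c) div 2) else 0)) =
    (\<Sum>i=0..n div 2. of_nat (n choose (n - 2 * i)) * of_nat (2 * i choose i) * x ^ i * y ^ (n - 2 * i))"
proof -
  have "(\<Sum>c=0..n. of_nat (n choose c) * y ^ c *
      (if even (n - c) then of_nat (n - c choose ((n - c) div 2)) * x ^ ((n - c) div 2) else 0)) =
    (\<Sum>d=0..n. if even d then of_nat (n choose (n - d)) * of_nat (d choose (d div 2)) * x ^ (d div 2) * y ^ (n - d) else 0)"
    by (subst sum.atLeastAtMost_rev) (intro sum.cong refl, auto simp: algebra_simps)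
  also have "\<dots> = (\<Sum>i=0..n div 2. of_nat (n choose (n - 2 * i)) * of_nat (2 * i choose i) * x ^ i * y ^ (n - 2 * i))"
    by (subst sum_atLeastAtMost_parity_split) simp
  finally show ?thesis .
qed

lemma periodic_points_eq_half_binomial_sums:
  assumes "n \<ge> 1"
  shows "int (periodic_points M N n) =
    2 * ((int M + int N + 1) ^ n
      - (\<Sum>c=0..n. int (n choose c) * int N ^ c * half_binomial_sum (int M) (n - c)))
    + (\<Sum>i=0..n div 2. int (n choose (n - 2*i)) * int (2*i choose i) * int M ^ i * int N ^ (n - 2*i))"
proof -
  have "int (periodic_points M N n) = (\<Sum>p | length p = n.
      int M ^ max (count_list p KLam) (count_list p KRho) * int N ^ count_list p KOne)"
    using assms by (simp add: periodic_points_eq_card_words card_words_eq_sum_kind_weight kind_weight_def)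
  also have "\<dots> = trinomial_sum n (\<lambda>a b c. int M ^ max a b * int N ^ c)"
    by (rule sum_kind_patterns_eq_trinomial_sum)
  finally show ?thesis
    by (simp only: trinomial_sum_max_power sum_central_binomial_terms)
qed

lemma sum_half_binomial_even:
  fixes x y :: "'a :: comm_semiring_1"
  assumes "even n"
  shows "(\<Sum>c=0..n. of_nat (n choose c) * y ^ c * half_binomial_sum x (n - c)) =
    (\<Sum>i=0..n div 2. of_nat (n choose (2*i)) * y ^ (2*i) *
       (\<Sum>j=0..n div 2 - i. of_nat (n - 2*i choose j) * x ^ j))
    + (\<Sum>i=0..<n div 2. of_nat (n choose (2*i+1)) * y ^ (2*i+1) *
       (\<Sum>j=0..<n div 2 - i. of_nat (n - 2*i - 1 choose j) * x ^ j))"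
proof -
  have "(n - 2 * i) div 2 = n div 2 - i" for i
    using assms by presburger
  moreover have "{0..(n - Suc (2 * i)) div 2} = {0..<n div 2 - i}" if "i < n div 2" for i
    using assms that by (auto simp: less_Suc_eq_le[symmetric])
  moreover have "(n + 1) div 2 = n div 2"
    using assms by presburger
  ultimately show ?thesis
    by (subst sum_atLeastAtMost_parity_split) (simp add: half_binomial_sum_def atLeast0LessThan)
qed

lemma sum_half_binomial_odd:
  fixes x y :: "'a :: comm_semiring_1"
  assumes "odd n"
  shows "(\<Sum>c=0..n. of_nat (n choose c) * y ^ c * half_binomial_sum x (n - c)) =
    (\<Sum>i=0..n div 2. of_nat (n choose (2*i)) * y ^ (2*i) *
       (\<Sum>j=0..(n - 1) div 2 - i. of_nat (n - 2*i choose j) * x ^ j))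
    + (\<Sum>i=0..(n - 1) div 2. of_nat (n choose (2*i+1)) * y ^ (2*i+1) *
       (\<Sum>j=0..(n - 1) div 2 - i. of_nat (n - 2*i - 1 choose j) * x ^ j))"
proof -
  have "(n - 2 * i) div 2 = (n - 1) div 2 - i" "(n - Suc (2 * i)) div 2 = (n - 1) div 2 - i" for i
    using assms by presburger+
  moreover have "{..<(n + 1) div 2} = {0..(n - 1) div 2}"
    using assms by auto presburger+
  ultimately show ?thesis
    by (subst sum_atLeastAtMost_parity_split) (simp add: half_binomial_sum_def)
qed

theorem proposition2p3:
  fixes M N n :: nat
  assumes "n \<ge> 1"
  shows "int (periodic_points M N n) =
    (if even n then
       2 * ((int M + int N + 1) ^ n
          - (\<Sum>i=0..n div 2. int (n choose (2*i)) * int N ^ (2*i) *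
               (\<Sum>j=0..n div 2 - i. int (n - 2*i choose j) * int M ^ j))
          - (\<Sum>i=0..<n div 2. int (n choose (2*i+1)) * int N ^ (2*i+1) *
               (\<Sum>j=0..<n div 2 - i. int (n - 2*i - 1 choose j) * int M ^ j)))
       + (\<Sum>i=0..n div 2. int (n choose (n - 2*i)) * int (2*i choose i) * int M ^ i * int N ^ (n - 2*i))
     else
       2 * ((int M + int N + 1) ^ n
          - (\<Sum>i=0..n div 2. int (n choose (2*i)) * int N ^ (2*i) *
               (\<Sum>j=0..(n - 1) div 2 - i. int (n - 2*i choose j) * int M ^ j))
          - (\<Sum>i=0..(n - 1) div 2. int (n choose (2*i+1)) * int N ^ (2*i+1) *
               (\<Sum>j=0..(n - 1) div 2 - i. int (n - 2*i - 1 choose j) * int M ^ j)))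
       + (\<Sum>i=0..(n - 1) div 2. int (n choose (n - 2*i)) * int N ^ (n - 2*i) * int (2*i choose i) * int M ^ i))"
proof (cases "even n")
  case True
  then show ?thesis
    using periodic_points_eq_half_binomial_sums[OF assms] by (simp add: sum_half_binomial_even)
next
  case False
  then have "(n - 1) div 2 = n div 2"
    by presburger
  then have central:
    "(\<Sum>i=0..n div 2. int (n choose (n - 2*i)) * int (2*i choose i) * int M ^ i * int N ^ (n - 2*i)) =
     (\<Sum>i=0..(n - 1) div 2. int (n choose (n - 2*i)) * int N ^ (n - 2*i) * int (2*i choose i) * int M ^ i)"
    by (simp add: mult_ac)
  show ?thesis
    using False periodic_points_eq_half_binomial_sums[OF assms]
    by (simp add: sum_half_binomial_odd central)
qed

end
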